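(* Let $E$ be a finite directed graph with no sinks. If $F$ is either an out-split or a balanced in-split of $E$, then the adjacency matrices of $E$ and $F$ are unitally shift equivalent.
   Context: A sink is a vertex emitting no edges. A rectangular $\{0,1\}$-matrix $D$ is a division matrix if every row contains at least one $1$ and every column contains exactly one $1$. With $A$ the adjacency matrix of $E$ and $B$ that of $F$: $F$ is an out-split of $E$ if there are a division matrix $D$ and an $\mathbb{N}$-matrix $M$ with $A=DM$, $B=MD$; $F$ is a balanced in-split of $E$ if there are a division matrix $D$ and rectangular $\mathbb{N}$-matrices $R_A,R_B$ with $A=D^tR_A$, $B=D^tR_B$ and $R_AD^t=R_BD^t$. Two square $\mathbb{N}$-matrices $A,B$ are shift equivalent if there are an integer $\ell\ge1$ and rectangular $\mathbb{N}$-matrices $R,S$ with $A^\ell=RS$, $B^\ell=SR$, $AR=RB$, $BS=SA$. Such a shift equivalence $(R,S)$ is unital if there are $m,k\in\mathbb{N}$ with $(B^t)^mR^t\underline{1}=(B^t)^{m+k}\underline{1}$, where $\underline1$ is the all-ones column vector. $A$ and $B$ are unitally shift equivalent if a unital shift equivalence from $A$ to $B$ exists. *)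

theory Defs
  imports "Jordan_Normal_Form.Matrix"
begin

text \<open>Finite directed (multi)graphs are represented by their adjacency matrices,
  square matrices over nat: entry (i,j) is the number of edges from vertex i to vertex j.\<close>

definition no_sinks :: "nat mat \<Rightarrow> bool" where
  "no_sinks A \<longleftrightarrow> (\<forall>i < dim_row A. \<exists>j < dim_col A. A $$ (i, j) \<noteq> 0)"

definition division_mat :: "nat mat \<Rightarrow> bool" where
  "division_mat D \<longleftrightarrow>
     (\<forall>i < dim_row D. \<forall>j < dim_col D. D $$ (i, j) \<in> {0, 1}) \<and>
     (\<forall>i < dim_row D. \<exists>j < dim_col D. D $$ (i, j) = 1) \<and>
     (\<forall>j < dim_col D. \<exists>!i. i < dim_row D \<and> D $$ (i, j) = 1)"

definition out_split :: "nat mat \<Rightarrow> nat mat \<Rightarrow> bool" where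
  "out_split A B \<longleftrightarrow> (\<exists>D M. division_mat D \<and> M \<in> carrier_mat (dim_col D) (dim_row D)
      \<and> A = D * M \<and> B = M * D)"

definition balanced_in_split :: "nat mat \<Rightarrow> nat mat \<Rightarrow> bool" where
  "balanced_in_split A B \<longleftrightarrow> (\<exists>D RA RB. division_mat D
      \<and> RA \<in> carrier_mat (dim_row D) (dim_col D) \<and> RB \<in> carrier_mat (dim_row D) (dim_col D)
      \<and> A = D\<^sup>T * RA \<and> B = D\<^sup>T * RB \<and> RA * D\<^sup>T = RB * D\<^sup>T)"

definition shift_equiv_via :: "nat mat \<Rightarrow> nat mat \<Rightarrow> nat \<Rightarrow> nat mat \<Rightarrow> nat mat \<Rightarrow> bool" where
  "shift_equiv_via A B l R S \<longleftrightarrow> l \<ge> 1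
     \<and> R \<in> carrier_mat (dim_row A) (dim_row B) \<and> S \<in> carrier_mat (dim_row B) (dim_row A)
     \<and> A ^\<^sub>m l = R * S \<and> B ^\<^sub>m l = S * R \<and> A * R = R * B \<and> B * S = S * A"

definition unital_shift_equiv :: "nat mat \<Rightarrow> nat mat \<Rightarrow> bool" where
  "unital_shift_equiv A B \<longleftrightarrow> (\<exists>l R S. shift_equiv_via A B l R S \<and>
     (\<exists>m k. ((B\<^sup>T ^\<^sub>m m) * R\<^sup>T) *\<^sub>v (vec (dim_row A) (\<lambda>_. 1))
            = (B\<^sup>T ^\<^sub>m (m + k)) *\<^sub>v (vec (dim_row B) (\<lambda>_. 1))))"

end

theory Submission
  imports Defs
begin

text \<open>An out-split \<open>A = D M\<close>, \<open>B = M D\<close> is an elementary shift equivalence of lag 1 with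
  \<open>R = D\<close>; it is unital because every column of a division matrix sums to one, so
  \<open>D\<^sup>T\<close> maps the all-ones vector to the all-ones vector.
  A balanced in-split \<open>A = D\<^sup>T R\<^sub>A\<close>, \<open>B = D\<^sup>T R\<^sub>B\<close> with \<open>R\<^sub>A D\<^sup>T = R\<^sub>B D\<^sup>T\<close> satisfies
  \<open>A B = B\<^sup>2\<close> and \<open>B A = A\<^sup>2\<close>, so \<open>(R, S) = (B, A)\<close> is a shift equivalence of lag 2,
  and it is trivially unital since \<open>R\<^sup>T = B\<^sup>T\<close>.
  Neither argument uses the absence of sinks.\<close>

lemma unital_shift_equivI:
  assumes "shift_equiv_via A B l R S"
    and "R\<^sup>T *\<^sub>v vec (dim_row A) (\<lambda>_. 1) = (B\<^sup>T ^\<^sub>m k) *\<^sub>v vec (dim_row B) (\<lambda>_. 1)"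
  shows "unital_shift_equiv A B"
proof -
  from assms(1) have "R \<in> carrier_mat (dim_row A) (dim_row B)" "l \<ge> 1"
    and "B ^\<^sub>m l = S * R" unfolding shift_equiv_via_def by auto
  moreover from \<open>l \<ge> 1\<close> have "dim_col (B ^\<^sub>m l) = dim_col B"
    by (cases l) simp_all
  ultimately have "(B\<^sup>T ^\<^sub>m 0) * R\<^sup>T = R\<^sup>T" by simp
  with assms show ?thesis
    unfolding unital_shift_equiv_def by (metis add_0)
qed

lemma division_mat_col_sum:
  assumes "division_mat D" "j < dim_col D"
  shows "(\<Sum>i<dim_row D. D $$ (i, j)) = 1"
proof -
  from assms obtain i0 where i0: "i0 < dim_row D" "D $$ (i0, j) = 1"
    and unique: "\<And>i. i < dim_row D \<Longrightarrow> D $$ (i, j) = 1 \<Longrightarrow> i = i0"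
    unfolding division_mat_def by metis
  have zero: "\<And>i. i < dim_row D \<Longrightarrow> i \<noteq> i0 \<Longrightarrow> D $$ (i, j) = 0"
    using assms unique unfolding division_mat_def by blast
  have "(\<Sum>i<dim_row D. D $$ (i, j)) = (\<Sum>i\<in>{i0}. D $$ (i, j))"
    by (rule sum.mono_neutral_right) (use i0 zero in auto)
  then show ?thesis using i0 by simp
qed

lemma division_mat_transpose_mult_ones:
  assumes "division_mat D"
  shows "D\<^sup>T *\<^sub>v vec (dim_row D) (\<lambda>_. 1) = vec (dim_col D) (\<lambda>_. 1)"
proof (rule eq_vecI)
  fix j assume "j < dim_vec (vec (dim_col D) (\<lambda>_. 1::nat))"
  then have j: "j < dim_col D" by simp
  then have "(D\<^sup>T *\<^sub>v vec (dim_row D) (\<lambda>_. 1)) $ j = (\<Sum>i<dim_row D. D $$ (i, j))"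
    by (simp add: mult_mat_vec_def scalar_prod_def lessThan_atLeast0 row_transpose col_def)
  also have "\<dots> = 1" using division_mat_col_sum[OF assms j] .
  finally show "(D\<^sup>T *\<^sub>v vec (dim_row D) (\<lambda>_. 1)) $ j = vec (dim_col D) (\<lambda>_. 1) $ j"
    using j by simp
qed simp

lemma elementary_shift_equiv:
  assumes R: "R \<in> carrier_mat p q" and S: "S \<in> carrier_mat q p"
  shows "shift_equiv_via (R * S) (S * R) 1 R S"
  unfolding shift_equiv_via_def
  using R S assoc_mult_mat[OF R S R] assoc_mult_mat[OF S R S] by simp

lemma out_split_imp_unital_shift_equiv:
  assumes "out_split A B"
  shows "unital_shift_equiv A B"
proof -
  from assms obtain D M where D: "division_mat D"
    and M: "M \<in> carrier_mat (dim_col D) (dim_row D)" and A: "A = D * M" and B: "B = M * D"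
    unfolding out_split_def by blast
  have Dc: "D \<in> carrier_mat (dim_row D) (dim_col D)" by simp
  have "shift_equiv_via A B 1 D M"
    unfolding A B using elementary_shift_equiv[OF Dc M] .
  moreover have "D\<^sup>T *\<^sub>v vec (dim_row A) (\<lambda>_. 1) = (B\<^sup>T ^\<^sub>m 0) *\<^sub>v vec (dim_row B) (\<lambda>_. 1)"
    using division_mat_transpose_mult_ones[OF D] A B M by simp
  ultimately show ?thesis by (rule unital_shift_equivI)
qed

lemma common_left_factor_mult:
  assumes P: "P \<in> carrier_mat q p" and X: "X \<in> carrier_mat p q" and Y: "Y \<in> carrier_mat p q"
    and Z: "Z \<in> carrier_mat p r" and balanced: "X * P = Y * P"
  shows "(P * X) * (P * Z) = (P * Y) * (P * Z)"
proof -
  have "(P * X) * (P * Z) = P * ((X * P) * Z)"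
    using P X Z by (simp add: assoc_mult_mat[of _ q p _ q _ r])
  also have "\<dots> = (P * Y) * (P * Z)"
    unfolding balanced using P Y Z by (simp add: assoc_mult_mat[of _ q p _ q _ r])
  finally show ?thesis .
qed

lemma balanced_in_split_imp_unital_shift_equiv:
  assumes "balanced_in_split A B"
  shows "unital_shift_equiv A B"
proof -
  from assms obtain D RA RB where
        RA: "RA \<in> carrier_mat (dim_row D) (dim_col D)" and RB: "RB \<in> carrier_mat (dim_row D) (dim_col D)"
    and A: "A = D\<^sup>T * RA" and B: "B = D\<^sup>T * RB" and balanced: "RA * D\<^sup>T = RB * D\<^sup>T"
    unfolding balanced_in_split_def by blast
  have DT: "D\<^sup>T \<in> carrier_mat (dim_col D) (dim_row D)" by simp
  have AB: "A * B = B * B"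
    unfolding A B using common_left_factor_mult[OF DT RA RB RB balanced] .
  have BA: "B * A = A * A"
    unfolding A B using common_left_factor_mult[OF DT RB RA RA balanced[symmetric]] .
  have "A \<in> carrier_mat (dim_col D) (dim_col D)" "B \<in> carrier_mat (dim_col D) (dim_col D)"
    using A B RA RB by auto
  then have "shift_equiv_via A B 2 B A"
    unfolding shift_equiv_via_def using AB BA by (simp add: numeral_2_eq_2)
  moreover have "B\<^sup>T *\<^sub>v vec (dim_row A) (\<lambda>_. 1) = (B\<^sup>T ^\<^sub>m 1) *\<^sub>v vec (dim_row B) (\<lambda>_. 1)"
    using A B by simp
  ultimately show ?thesis by (rule unital_shift_equivI)
qed

theorem corollary4p2:
  fixes A B :: "nat mat" and n :: nat
  assumes "A \<in> carrier_mat n n"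
    and "no_sinks A"
    and "out_split A B \<or> balanced_in_split A B"
  shows "unital_shift_equiv A B"
  using assms(3) out_split_imp_unital_shift_equiv balanced_in_split_imp_unital_shift_equiv
  by blast

end
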